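(* Let $\pi$ be a probability vector on $[K]$, let $\ell\in[-1,1]^K$ be fixed, and let $A\sim\pi$. Then for every $i\in[K]$, $$\mathbb{E}\left[\left(\ell_i\mathbb{I}(A=i)-\frac{\pi_i\sqrt{\pi_A}\,\ell_A}{\sum_{j=1}^K\pi_j^{3/2}}\right)^2\right]\le 5\,\pi_i(1-\pi_i).$$
   Context: The expectation is over $A\sim\pi$ only. *)

theory Defs
  imports "HOL-Analysis.Analysis"
begin

end

theory Submission
  imports Defs
begin

(*
  Write p = \<pi> i, S = \<Sum>_j \<pi>_j^(3/2), and let T and Q be the sums of \<pi>_j^(3/2) and \<pi>_j^2
  over j \<noteq> i, so that S = p^(3/2) + T. Since |l| \<le> 1, the summand a = i is at most
  p (T/S)^2 and the remaining summands add up to at most (p/S)^2 Q.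
  As T \<le> 1 - p, we get (T/S)^2 \<le> T/S \<le> 3(1 - p), because S \<ge> 1/3 once p > 2/3.
  For the other part, Q \<le> (1 - p)^2 and p Q \<le> S^2 (from p sqrt(\<pi>_j) \<le> max(p, \<pi>_j)^(3/2) \<le> S)
  give (p/S)^2 Q \<le> 2 p (1 - p): directly if p \<le> 1/2, and via S^2 \<ge> p^3 if p > 1/2.
*)

lemma powr_three_halves: "0 \<le> (x::real) \<Longrightarrow> x powr (3/2) = x * sqrt x"
  using powr_add[of x 1 "1/2"] by (cases "x = 0") (simp_all add: powr_half_sqrt)

lemma own_term_bound:
  fixes p T :: real
  assumes p: "0 \<le> p" "p \<le> 1" and T: "0 \<le> T" "T \<le> 1 - p" and S: "0 < p * sqrt p + T"
  shows "(T / (p * sqrt p + T))\<^sup>2 \<le> 3 * (1 - p)"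
proof -
  define S where "S = p * sqrt p + T"
  have "T \<le> S" using p unfolding S_def by simp
  then have ratio: "0 \<le> T / S" "T / S \<le> 1" using T S unfolding S_def by auto
  have "T / S \<le> 3 * (1 - p)"
  proof (cases "p \<le> 2/3")
    case False
    then have "(4/5)\<^sup>2 \<le> (sqrt p)\<^sup>2" using p by (simp add: power2_eq_square)
    then have "4/5 \<le> sqrt p" by (rule power2_le_imp_le) (use p in simp)
    then have "(2/3) * (4/5) \<le> p * sqrt p" using False by (intro mult_mono) auto
    then have "1/3 \<le> S" using T unfolding S_def by linarith
    then have "T / S \<le> T / (1/3)" using T by (intro divide_left_mono) auto
    then show ?thesis using T by simp
  qed (use ratio in simp)
  moreover have "(T / S)\<^sup>2 \<le> T / S" unfolding power2_eq_square by (metis ratio mult_left_le)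
  ultimately show ?thesis unfolding S_def by linarith
qed

lemma cross_term_bound:
  fixes p Q S :: real
  assumes p: "0 \<le> p" "p \<le> 1" and Q: "0 \<le> Q" "Q \<le> (1 - p)\<^sup>2" "p * Q \<le> S\<^sup>2"
    and S: "p * sqrt p \<le> S" "0 < S"
  shows "(p / S)\<^sup>2 * Q \<le> 2 * p * (1 - p)"
proof (cases "p \<le> 1/2")
  case True
  have "(p / S)\<^sup>2 * Q = p * (p * Q / S\<^sup>2)" by (simp add: power_divide power2_eq_square)
  also have "\<dots> \<le> p" using Q S p by (intro mult_left_le) (auto simp: divide_le_eq_1)
  also have "\<dots> \<le> p * (2 * (1 - p))" using mult_left_mono[of 1 "2 * (1 - p)" p] True p by simp
  finally show ?thesis by (simp add: algebra_simps)
next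
  case False
  then have p_pos: "0 < p" by simp
  have "p ^ 3 = (p * sqrt p)\<^sup>2" using p by (simp add: power_mult_distrib power2_eq_square power3_eq_cube)
  also have "\<dots> \<le> S\<^sup>2" using S p by (intro power_mono) auto
  finally have S_cube: "p ^ 3 \<le> S\<^sup>2" .
  have "(p / S)\<^sup>2 * Q = p\<^sup>2 * Q / S\<^sup>2" by (simp add: power_divide)
  also have "\<dots> \<le> p\<^sup>2 * Q / p ^ 3" using S_cube p_pos Q S by (intro divide_left_mono) auto
  also have "\<dots> = Q / p" using p_pos by (simp add: power2_eq_square power3_eq_cube)
  also have "\<dots> \<le> (1 - p)\<^sup>2 / p" using Q p_pos by (simp add: divide_right_mono)
  also have "\<dots> \<le> 2 * p * (1 - p)"
  proof -
    have "0 \<le> (2 * p - 1) * (p + 1)" using False by simp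
    then have "1 - p \<le> 2 * p * p" by (simp add: algebra_simps)
    then have "(1 - p) * (1 - p) \<le> (1 - p) * (2 * p * p)" using p by (intro mult_left_mono) auto
    then have "(1 - p)\<^sup>2 \<le> 2 * p * (1 - p) * p" by (simp add: power2_eq_square algebra_simps)
    then show ?thesis using p_pos by (simp add: divide_le_eq)
  qed
  finally show ?thesis .
qed

context
  fixes A :: "'a set" and \<pi> :: "'a \<Rightarrow> real"
  assumes finite: "finite A"
    and nonneg: "\<And>j. j \<in> A \<Longrightarrow> 0 \<le> \<pi> j"
    and sum_one: "sum \<pi> A = 1"
begin

lemma prob_le_one: "j \<in> A \<Longrightarrow> \<pi> j \<le> 1"
  using member_le_sum[of j A \<pi>] finite nonneg sum_one by auto

lemma sum_remove_eq: "i \<in> A \<Longrightarrow> sum \<pi> (A - {i}) = 1 - \<pi> i"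
  using sum.remove[OF finite, of i \<pi>] sum_one by simp

lemma three_halves_sum_pos: "0 < (\<Sum>j\<in>A. \<pi> j * sqrt (\<pi> j))"
proof -
  obtain j where j: "j \<in> A" "\<pi> j \<noteq> 0"
    using sum_one by (metis sum.neutral zero_neq_one)
  then have "0 < \<pi> j * sqrt (\<pi> j)" using nonneg[of j] by simp
  also have "\<dots> \<le> (\<Sum>j\<in>A. \<pi> j * sqrt (\<pi> j))"
    using j finite nonneg by (intro member_le_sum) auto
  finally show ?thesis .
qed

lemma three_halves_sum_remove_le:
  "(\<Sum>j\<in>A - {i}. \<pi> j * sqrt (\<pi> j)) \<le> 1 - \<pi> i" if "i \<in> A"
proof -
  have "(\<Sum>j\<in>A - {i}. \<pi> j * sqrt (\<pi> j)) \<le> sum \<pi> (A - {i})"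
    using nonneg prob_le_one by (intro sum_mono) (simp add: mult_left_le)
  with sum_remove_eq[OF that] show ?thesis by simp
qed

lemma square_sum_remove_le:
  "(\<Sum>j\<in>A - {i}. (\<pi> j)\<^sup>2) \<le> (1 - \<pi> i)\<^sup>2" if "i \<in> A"
proof -
  have "\<pi> j \<le> 1 - \<pi> i" if "j \<in> A - {i}" for j
    using member_le_sum[of j "A - {i}" \<pi>] that finite nonneg sum_remove_eq[OF \<open>i \<in> A\<close>] by auto
  then have "(\<Sum>j\<in>A - {i}. (\<pi> j)\<^sup>2) \<le> (\<Sum>j\<in>A - {i}. \<pi> j * (1 - \<pi> i))"
    unfolding power2_eq_square using nonneg by (intro sum_mono mult_left_mono) auto
  also have "\<dots> = (1 - \<pi> i)\<^sup>2"
    using sum_remove_eq[OF that] by (simp add: sum_distrib_right[symmetric] power2_eq_square)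
  finally show ?thesis .
qed

lemma weighted_square_sum_remove_le:
  "\<pi> i * (\<Sum>j\<in>A - {i}. (\<pi> j)\<^sup>2) \<le> (\<Sum>j\<in>A. \<pi> j * sqrt (\<pi> j))\<^sup>2" if i: "i \<in> A"
proof -
  define S where "S = (\<Sum>j\<in>A. \<pi> j * sqrt (\<pi> j))"
  have term_le: "\<pi> j * sqrt (\<pi> j) \<le> S" if "j \<in> A" for j
    unfolding S_def using that finite nonneg by (intro member_le_sum) auto
  have "\<pi> i * (\<pi> j)\<^sup>2 \<le> S * (\<pi> j * sqrt (\<pi> j))" if j: "j \<in> A" for j
  proof -
    have "\<pi> i * sqrt (\<pi> j) \<le> max (\<pi> i) (\<pi> j) * sqrt (max (\<pi> i) (\<pi> j))"
      using nonneg[OF i] nonneg[OF j] by (intro mult_mono) auto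
    also have "\<dots> \<le> S" using term_le i j by (simp add: max_def)
    finally have "\<pi> i * sqrt (\<pi> j) \<le> S" .
    then have "(\<pi> j * sqrt (\<pi> j)) * (\<pi> i * sqrt (\<pi> j)) \<le> (\<pi> j * sqrt (\<pi> j)) * S"
      using nonneg[OF j] by (intro mult_left_mono) auto
    then show ?thesis using nonneg[OF j] by (simp add: power2_eq_square algebra_simps)
  qed
  then have "\<pi> i * (\<Sum>j\<in>A - {i}. (\<pi> j)\<^sup>2) \<le> S * (\<Sum>j\<in>A - {i}. \<pi> j * sqrt (\<pi> j))"
    unfolding sum_distrib_left by (intro sum_mono) auto
  also have "\<dots> \<le> S * S"
    using three_halves_sum_pos nonneg finite unfolding S_def
    by (intro mult_left_mono sum_mono2) auto
  finally show ?thesis unfolding S_def by (simp add: power2_eq_square)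
qed

lemma estimator_second_moment_le:
  fixes l :: "'a \<Rightarrow> real"
  assumes l: "\<And>j. j \<in> A \<Longrightarrow> \<bar>l j\<bar> \<le> 1" and i: "i \<in> A"
  defines "S \<equiv> \<Sum>j\<in>A. \<pi> j * sqrt (\<pi> j)"
  shows "(\<Sum>a\<in>A. \<pi> a * ((if a = i then l i else 0) - \<pi> i * sqrt (\<pi> a) * l a / S)\<^sup>2)
         \<le> 5 * \<pi> i * (1 - \<pi> i)"
proof -
  define p where "p = \<pi> i"
  define T where "T = (\<Sum>j\<in>A - {i}. \<pi> j * sqrt (\<pi> j))"
  define Q where "Q = (\<Sum>j\<in>A - {i}. (\<pi> j)\<^sup>2)"
  define f where "f a = \<pi> a * ((if a = i then l i else 0) - p * sqrt (\<pi> a) * l a / S)\<^sup>2" for a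
  have p: "0 \<le> p" "p \<le> 1" unfolding p_def using nonneg prob_le_one i by auto
  have S_split: "S = p * sqrt p + T"
    unfolding S_def T_def p_def using sum.remove[OF finite i] by simp
  have S_pos: "0 < S" unfolding S_def by (rule three_halves_sum_pos)
  have T: "0 \<le> T" "T \<le> 1 - p"
    unfolding T_def p_def using nonneg three_halves_sum_remove_le[OF i] by (auto intro: sum_nonneg)
  have "f i = p * (l i)\<^sup>2 * (T / S)\<^sup>2"
    unfolding f_def p_def[symmetric] using S_split S_pos
    by (simp add: field_simps power2_eq_square)
  also have "\<dots> \<le> p * (T / S)\<^sup>2"
    using l[OF i] p by (intro mult_right_mono) (auto simp: abs_square_le_1 mult_left_le)
  also have "\<dots> \<le> p * (3 * (1 - p))"
    using own_term_bound[OF p T] S_split S_pos p by (intro mult_left_mono) auto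
  finally have own: "f i \<le> 3 * p * (1 - p)" by (simp add: algebra_simps)
  have "f a \<le> (p / S)\<^sup>2 * (\<pi> a)\<^sup>2" if a: "a \<in> A - {i}" for a
  proof -
    have "f a = (p / S)\<^sup>2 * (\<pi> a)\<^sup>2 * (l a)\<^sup>2"
      unfolding f_def using a nonneg[of a] by (simp add: power_divide power_mult_distrib power2_eq_square)
    also have "\<dots> \<le> (p / S)\<^sup>2 * (\<pi> a)\<^sup>2" using l[of a] a by (simp add: abs_square_le_1 mult_left_le)
    finally show ?thesis .
  qed
  then have "(\<Sum>a\<in>A - {i}. f a) \<le> (p / S)\<^sup>2 * Q"
    unfolding Q_def sum_distrib_left by (intro sum_mono) auto
  also have "\<dots> \<le> 2 * p * (1 - p)"
  proof (rule cross_term_bound[OF p])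
    show "0 \<le> Q" "Q \<le> (1 - p)\<^sup>2" "p * Q \<le> S\<^sup>2"
      unfolding Q_def p_def S_def
      using square_sum_remove_le[OF i] weighted_square_sum_remove_le[OF i] by (auto intro: sum_nonneg)
    show "p * sqrt p \<le> S" "0 < S" using S_split T S_pos by auto
  qed
  finally have cross: "(\<Sum>a\<in>A - {i}. f a) \<le> 2 * p * (1 - p)" .
  have "(\<Sum>a\<in>A. f a) = f i + (\<Sum>a\<in>A - {i}. f a)" using sum.remove[OF finite i] .
  with own cross show ?thesis unfolding f_def p_def by simp
qed

end

theorem mainTheorem8:
  fixes K :: nat and \<pi> l :: "nat \<Rightarrow> real" and i :: nat
  assumes "K \<ge> 1"
    and "\<forall>j\<in>{1..K}. \<pi> j \<ge> 0"
    and "(\<Sum>j=1..K. \<pi> j) = 1"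
    and "\<forall>j\<in>{1..K}. \<bar>l j\<bar> \<le> 1"
    and "i \<in> {1..K}"
  shows "(\<Sum>a=1..K. \<pi> a *
           ((if a = i then l i else 0)
            - \<pi> i * sqrt (\<pi> a) * l a / (\<Sum>j=1..K. \<pi> j powr (3/2)))\<^sup>2)
         \<le> 5 * \<pi> i * (1 - \<pi> i)"
proof -
  have "(\<Sum>j=1..K. \<pi> j powr (3/2)) = (\<Sum>j=1..K. \<pi> j * sqrt (\<pi> j))"
    using assms(2) by (intro sum.cong) (simp_all add: powr_three_halves)
  with estimator_second_moment_le[of "{1..K}" \<pi> l i] assms(2-5) show ?thesis by simp
qed

end
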